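(* Let $n\in\mathbb{N}$ and $\varepsilon\in(0,1]$. In the cumulative dual access model, any testing algorithm for uniformity over $[n]$ (i.e., for the property $\mathcal{P}=\{\mathcal{U}_n\}$, where $\mathcal{U}_n$ is the uniform distribution on $[n]$) with distance parameter $\varepsilon$ must have sample (query) complexity $\Omega(1/\varepsilon)$.
   Context: Distributions are over $[n]=\{1,\dots,n\}$. The total variation distance is $d_{TV}(D_1,D_2)=\frac12\sum_{i\in[n]}|D_1(i)-D_2(i)|$, and $d_{TV}(D,\mathcal{P})=\min_{D'\in\mathcal{P}}d_{TV}(D,D')$. In the cumulative dual access model, an algorithm accesses an unknown distribution $D$ via two oracles: a sampling oracle $\mathsf{SAMP}_D$ that returns $i\in[n]$ with probability $D(i)$, independently of all previous calls, and a cumulative evaluation oracle $\mathsf{CEVAL}_D$ that on query $j\in[n]$ returns $D([j])=\sum_{i=1}^j D(i)$. Each call to either oracle counts as one query. A $q$-query testing algorithm for $\mathcal{P}$ takes $n$, $\varepsilon\in(0,1]$ and oracle access to $D$, makes at most $q(\varepsilon,n)$ oracle calls, and outputs ACCEPT with probability at least $2/3$ if $D\in\mathcal{P}$ and REJECT with probability at least $2/3$ if $d_{TV}(D,\mathcal{P})\ge\varepsilon$. *)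

theory Defs
  imports "HOL-Probability.Probability"
begin

text \<open>Adaptive randomized query algorithms in the cumulative dual access model,
  represented as decision trees.  Leaves output ACCEPT (True) or REJECT (False);
  a Samp node calls the sampling oracle and branches on the returned element;
  a Ceval node queries the cumulative evaluation oracle at j and branches on the
  returned real value; a Rand node flips internal (discrete) random coins.\<close>

datatype alg =
    Out bool
  | Samp "nat \<Rightarrow> alg"
  | Ceval nat "real \<Rightarrow> alg"
  | Rand "alg pmf"

definition ceval :: "nat pmf \<Rightarrow> nat \<Rightarrow> real" where
  "ceval D j = (\<Sum>i\<in>{1..j}. pmf D i)"

primrec run :: "nat pmf \<Rightarrow> alg \<Rightarrow> bool pmf" where
  "run D (Out b) = return_pmf b"
| "run D (Samp f) = bind_pmf D (\<lambda>i. run D (f i))"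
| "run D (Ceval j g) = run D (g (ceval D j))"
| "run D (Rand p) = join_pmf (map_pmf (run D) p)"

primrec queries_le :: "alg \<Rightarrow> nat \<Rightarrow> bool" where
  "queries_le (Out b) q = True"
| "queries_le (Samp f) q = (q > 0 \<and> (\<forall>i. queries_le (f i) (q - 1)))"
| "queries_le (Ceval j g) q = (q > 0 \<and> (\<forall>x. queries_le (g x) (q - 1)))"
| "queries_le (Rand p) q = (\<forall>h\<in>set_pmf (map_pmf queries_le p). h q)"

definition distr_on :: "nat \<Rightarrow> nat pmf \<Rightarrow> bool" where
  "distr_on n D \<longleftrightarrow> set_pmf D \<subseteq> {1..n}"

definition unif :: "nat \<Rightarrow> nat pmf" where
  "unif n = pmf_of_set {1..n}"

definition dtv :: "nat \<Rightarrow> nat pmf \<Rightarrow> nat pmf \<Rightarrow> real" where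
  "dtv n D1 D2 = (1/2) * (\<Sum>i\<in>{1..n}. \<bar>pmf D1 i - pmf D2 i\<bar>)"

text \<open>T is a q-query testing algorithm for uniformity over [n] with distance
  parameter eps (the property is the singleton {U_n}, so d_TV(D,P) = d_TV(D,U_n)).\<close>
definition unif_tester :: "nat \<Rightarrow> real \<Rightarrow> nat \<Rightarrow> alg \<Rightarrow> bool" where
  "unif_tester n eps q T \<longleftrightarrow>
     queries_le T q \<and>
     pmf (run (unif n) T) True \<ge> 2/3 \<and>
     (\<forall>D. distr_on n D \<and> dtv n D (unif n) \<ge> eps \<longrightarrow> pmf (run D T) False \<ge> 2/3)"

end

theory Submission
  imports Defs
begin

text \<open>
  Cut [n] into K \<approx> 1/(6\<epsilon>) consecutive blocks of length m \<approx> 2\<epsilon>n and let D_k be U_n with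
  the mass of the k-th block moved onto its last point, so that D_k is \<epsilon>-far from U_n
  and a correct tester must accept U_n and reject each D_k, making
  \<Sum>_k |P_{D_k}[accept] - P_U[accept]| \<ge> K/3.
  A CEVAL query at j sees a difference only for the block containing j, and a SAMP query
  shifts each acceptance probability by at most the total mass (m-1)/n \<le> 1/K that was moved.
  Hence every query adds at most 1 + K(m-1)/n \<le> 2 to the sum, and q \<ge> K/6 = \<Omega>(1/\<epsilon>).
\<close>

lemma integrable_measure_pmf_bounded:
  fixes f :: "'a \<Rightarrow> real"
  assumes "\<And>x. \<bar>f x\<bar> \<le> B"
  shows "integrable (measure_pmf M) f"
  by (rule measure_pmf.integrable_const_bound[where B = B]) (use assms in auto)

lemma abs_expectation_le_expectation_abs:
  fixes f :: "'a \<Rightarrow> real"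
  assumes "integrable (measure_pmf M) f"
  shows "\<bar>measure_pmf.expectation M f\<bar> \<le> measure_pmf.expectation M (\<lambda>x. \<bar>f x\<bar>)"
  using integral_norm_bound[of M f] by simp

lemma sum_abs_expectation_diff_le:
  fixes f :: "'k \<Rightarrow> 'a \<Rightarrow> real" and g :: "'a \<Rightarrow> real"
  assumes "\<And>k x. \<bar>f k x\<bar> \<le> B" and "\<And>x. \<bar>g x\<bar> \<le> B"
    and pointwise: "\<And>x. x \<in> set_pmf M \<Longrightarrow> (\<Sum>k\<in>I. \<bar>f k x - g x\<bar>) \<le> C"
  shows "(\<Sum>k\<in>I. \<bar>measure_pmf.expectation M (f k) - measure_pmf.expectation M g\<bar>) \<le> C"
proof -
  have int_f: "integrable (measure_pmf M) (f k)" for k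
    using assms(1) by (rule integrable_measure_pmf_bounded)
  have int_g: "integrable (measure_pmf M) g"
    using assms(2) by (rule integrable_measure_pmf_bounded)
  have "\<bar>measure_pmf.expectation M (f k) - measure_pmf.expectation M g\<bar>
          \<le> measure_pmf.expectation M (\<lambda>x. \<bar>f k x - g x\<bar>)" for k
    using abs_expectation_le_expectation_abs[of M "\<lambda>x. f k x - g x"] int_f int_g by simp
  then have "(\<Sum>k\<in>I. \<bar>measure_pmf.expectation M (f k) - measure_pmf.expectation M g\<bar>)
               \<le> (\<Sum>k\<in>I. measure_pmf.expectation M (\<lambda>x. \<bar>f k x - g x\<bar>))"
    by (rule sum_mono)
  also have "\<dots> = measure_pmf.expectation M (\<lambda>x. \<Sum>k\<in>I. \<bar>f k x - g x\<bar>)"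
    by (rule Bochner_Integration.integral_sum[symmetric]) (use int_f int_g in auto)
  also have "\<dots> \<le> C"
    by (rule measure_pmf.integral_le_const) (use int_f int_g pointwise in \<open>auto intro: AE_pmfI\<close>)
  finally show ?thesis .
qed

lemma abs_expectation_map_pmf_diff_le:
  fixes g :: "'a \<Rightarrow> real"
  assumes g: "\<And>x. 0 \<le> g x \<and> g x \<le> 1"
  shows "\<bar>measure_pmf.expectation (map_pmf f M) g - measure_pmf.expectation M g\<bar>
           \<le> measure_pmf.prob M {x. f x \<noteq> x}"
proof -
  have pointwise: "\<bar>g (f x) - g x\<bar> \<le> indicator {x. f x \<noteq> x} x" for x
    using g[of x] g[of "f x"] by (cases "f x = x") auto
  have int_g: "integrable (measure_pmf M) g"
    by (rule integrable_measure_pmf_bounded[where B = 1]) (use g in auto)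
  have int_gf: "integrable (measure_pmf M) (\<lambda>x. g (f x))"
    by (rule integrable_measure_pmf_bounded[where B = 1]) (use g in auto)
  have int_ind: "integrable (measure_pmf M) (indicator {x. f x \<noteq> x} :: 'a \<Rightarrow> real)"
    by (rule integrable_measure_pmf_bounded[where B = 1]) (simp add: indicator_def)
  have "measure_pmf.expectation (map_pmf f M) g - measure_pmf.expectation M g
          = measure_pmf.expectation M (\<lambda>x. g (f x) - g x)"
    using int_g int_gf by (simp add: integral_map_pmf Bochner_Integration.integral_diff)
  also have "\<bar>\<dots>\<bar> \<le> measure_pmf.expectation M (\<lambda>x. \<bar>g (f x) - g x\<bar>)"
    by (rule abs_expectation_le_expectation_abs) (use int_g int_gf in auto)
  also have "\<dots> \<le> measure_pmf.expectation M (indicator {x. f x \<noteq> x})"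
    by (rule integral_mono) (use int_g int_gf int_ind pointwise in auto)
  finally show ?thesis by simp
qed

lemma pmf_True_eq_1_minus_False: "pmf (p :: bool pmf) True = 1 - pmf p False"
proof -
  have "sum (pmf p) UNIV = 1" by (rule sum_pmf_eq_1) auto
  then show ?thesis by (simp add: UNIV_bool)
qed

definition accept_prob :: "nat pmf \<Rightarrow> alg \<Rightarrow> real" where
  "accept_prob D T = pmf (run D T) True"

lemma accept_prob_bounds: "0 \<le> accept_prob D T \<and> accept_prob D T \<le> 1"
  by (simp add: accept_prob_def pmf_le_1)

lemma abs_accept_prob_diff_le_1: "\<bar>accept_prob D T - accept_prob D' T'\<bar> \<le> 1"
  using accept_prob_bounds[of D T] accept_prob_bounds[of D' T'] by (simp add: abs_le_iff)

lemma accept_prob_Samp: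
  "accept_prob D (Samp f) = measure_pmf.expectation D (\<lambda>i. accept_prob D (f i))"
  by (simp add: accept_prob_def pmf_bind)

lemma accept_prob_Ceval: "accept_prob D (Ceval j g) = accept_prob D (g (ceval D j))"
  by (simp add: accept_prob_def)

lemma accept_prob_Rand:
  "accept_prob D (Rand p) = measure_pmf.expectation p (accept_prob D)"
  by (simp add: accept_prob_def[abs_def] pmf_join integral_map_pmf)

lemma sum_accept_prob_diff_Samp_le:
  fixes U :: "nat pmf" and D :: "nat \<Rightarrow> nat pmf"
  assumes samp_close: "\<And>k g. k < K \<Longrightarrow> (\<And>i. 0 \<le> g i \<and> g i \<le> 1) \<Longrightarrow>
       \<bar>measure_pmf.expectation (D k) g - measure_pmf.expectation U g\<bar> \<le> \<rho>"
    and branches: "\<And>i. (\<Sum>k<K. \<bar>accept_prob (D k) (f i) - accept_prob U (f i)\<bar>) \<le> C"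
  shows "(\<Sum>k<K. \<bar>accept_prob (D k) (Samp f) - accept_prob U (Samp f)\<bar>) \<le> K * \<rho> + C"
proof -
  define h where "h k i = accept_prob (D k) (f i)" for k i
  define h0 where "h0 i = accept_prob U (f i)" for i
  have bounded: "\<bar>h k i\<bar> \<le> 1" "\<bar>h0 i\<bar> \<le> 1" for k i
    using accept_prob_bounds unfolding h_def h0_def by (metis abs_of_nonneg)+
  have "(\<Sum>k<K. \<bar>accept_prob (D k) (Samp f) - accept_prob U (Samp f)\<bar>)
      \<le> (\<Sum>k<K. \<rho> + \<bar>measure_pmf.expectation U (h k) - measure_pmf.expectation U h0\<bar>)"
  proof (rule sum_mono)
    fix k assume "k \<in> {..<K}"
    then have "\<bar>measure_pmf.expectation (D k) (h k) - measure_pmf.expectation U (h k)\<bar> \<le> \<rho>"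
      by (intro samp_close) (auto simp: h_def accept_prob_bounds)
    then show "\<bar>accept_prob (D k) (Samp f) - accept_prob U (Samp f)\<bar>
        \<le> \<rho> + \<bar>measure_pmf.expectation U (h k) - measure_pmf.expectation U h0\<bar>"
      by (simp add: accept_prob_Samp h_def[abs_def] h0_def[abs_def])
  qed
  also have "\<dots> \<le> K * \<rho> + C"
    using sum_abs_expectation_diff_le[of h 1 h0 U "{..<K}"] bounded branches
    by (simp add: sum.distrib h_def h0_def)
  finally show ?thesis .
qed

lemma sum_accept_prob_diff_Ceval_le:
  fixes U :: "nat pmf" and D :: "nat \<Rightarrow> nat pmf"
  assumes same: "\<And>k. k \<noteq> k0 \<Longrightarrow> ceval (D k) j = ceval U j"
    and branch: "(\<Sum>k<K. \<bar>accept_prob (D k) (g (ceval U j)) - accept_prob U (g (ceval U j))\<bar>) \<le> C"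
  shows "(\<Sum>k<K. \<bar>accept_prob (D k) (Ceval j g) - accept_prob U (Ceval j g)\<bar>) \<le> C + 1"
proof -
  define v where "v = ceval U j"
  have "(\<Sum>k<K. \<bar>accept_prob (D k) (Ceval j g) - accept_prob U (Ceval j g)\<bar>)
      \<le> (\<Sum>k<K. \<bar>accept_prob (D k) (g v) - accept_prob U (g v)\<bar> + (if k = k0 then 1 else 0))"
  proof (rule sum_mono)
    fix k
    show "\<bar>accept_prob (D k) (Ceval j g) - accept_prob U (Ceval j g)\<bar>
        \<le> \<bar>accept_prob (D k) (g v) - accept_prob U (g v)\<bar> + (if k = k0 then 1 else 0)"
      using abs_accept_prob_diff_le_1[of "D k" "Ceval j g" U "Ceval j g"]
        abs_ge_zero[of "accept_prob (D k) (g v) - accept_prob U (g v)"]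
      by (cases "k = k0") (simp_all add: accept_prob_Ceval same v_def)
  qed
  also have "\<dots> \<le> C + 1"
  proof -
    have "(\<Sum>k<K. (if k = k0 then 1 else 0 :: real)) \<le> 1" by simp
    then show ?thesis using branch by (simp add: sum.distrib v_def)
  qed
  finally show ?thesis .
qed

lemma sum_accept_prob_diff_le:
  fixes U :: "nat pmf" and D :: "nat \<Rightarrow> nat pmf" and \<rho> :: real
  assumes rho: "\<rho> \<ge> 0"
    and ceval_separates: "\<And>j. \<exists>k0. \<forall>k. k \<noteq> k0 \<longrightarrow> ceval (D k) j = ceval U j"
    and samp_close: "\<And>k g. k < K \<Longrightarrow> (\<And>i. 0 \<le> g i \<and> g i \<le> 1) \<Longrightarrow>
       \<bar>measure_pmf.expectation (D k) g - measure_pmf.expectation U g\<bar> \<le> \<rho>"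
    and "queries_le T q"
  shows "(\<Sum>k<K. \<bar>accept_prob (D k) T - accept_prob U T\<bar>) \<le> real q * (1 + K * \<rho>)"
  using \<open>queries_le T q\<close>
proof (induction T arbitrary: q)
  case (Out b)
  then show ?case using rho by (simp add: accept_prob_def)
next
  case (Samp f)
  then have "(\<Sum>k<K. \<bar>accept_prob (D k) (Samp f) - accept_prob U (Samp f)\<bar>)
               \<le> K * \<rho> + real (q - 1) * (1 + K * \<rho>)"
    by (intro sum_accept_prob_diff_Samp_le[OF samp_close] Samp.IH rangeI) simp_all
  then show ?case using Samp.prems rho by (simp add: of_nat_diff algebra_simps)
next
  case (Ceval j g)
  obtain k0 where "\<And>k. k \<noteq> k0 \<Longrightarrow> ceval (D k) j = ceval U j"
    using ceval_separates by blast
  then have "(\<Sum>k<K. \<bar>accept_prob (D k) (Ceval j g) - accept_prob U (Ceval j g)\<bar>)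
               \<le> real (q - 1) * (1 + K * \<rho>) + 1"
    using Ceval.prems by (intro sum_accept_prob_diff_Ceval_le Ceval.IH rangeI) simp_all
  then show ?case
    using Ceval.prems mult_nonneg_nonneg[OF rho, of "real K"] by (simp add: of_nat_diff algebra_simps)
next
  case (Rand p)
  then show ?case
    unfolding accept_prob_Rand
    by (intro sum_abs_expectation_diff_le[where B = 1])
       (auto intro: abs_of_nonneg simp: accept_prob_bounds)
qed

definition collapse_block :: "nat \<Rightarrow> nat \<Rightarrow> nat \<Rightarrow> nat" where
  "collapse_block a m i = (if a < i \<and> i \<le> a + m then a + m else i)"

lemma collapse_block_moved: "{i. collapse_block a m i \<noteq> i} = {a + 1..a + m - 1}"
  by (auto simp: collapse_block_def)

lemma ceval_eq_prob: "ceval D j = measure_pmf.prob D {1..j}"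
  unfolding ceval_def by (simp add: measure_measure_pmf_finite)

lemma ceval_map_collapse_block:
  assumes "j \<le> a \<or> a + m \<le> j"
  shows "ceval (map_pmf (collapse_block a m) D) j = ceval D j"
proof -
  have "collapse_block a m -` {1..j} = {1..j}"
    using assms by (auto simp: collapse_block_def split: if_splits)
  then show ?thesis by (simp add: ceval_eq_prob measure_map_pmf)
qed

lemma pmf_map_collapse_block_eq_0:
  assumes "i \<in> {a + 1..a + m - 1}"
  shows "pmf (map_pmf (collapse_block a m) D) i = 0"
proof -
  have "i \<notin> set_pmf (map_pmf (collapse_block a m) D)"
    using assms by (auto simp: collapse_block_def)
  then show ?thesis by (simp only: set_pmf_iff not_not)
qed

lemma distr_on_map_collapse_block:
  assumes "a + m \<le> n" and "distr_on n D"
  shows "distr_on n (map_pmf (collapse_block a m) D)"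
  using assms by (auto simp: distr_on_def collapse_block_def)

lemma set_pmf_unif: "n \<ge> 1 \<Longrightarrow> set_pmf (unif n) = {1..n}"
  unfolding unif_def by (simp add: set_pmf_of_set)

lemma prob_unif_le_card:
  assumes "n \<ge> 1" and "finite A"
  shows "measure_pmf.prob (unif n) A \<le> card A / n"
proof -
  have "card ({1..n} \<inter> A) \<le> card A"
    using assms(2) by (intro card_mono) auto
  then show ?thesis
    using assms(1) by (simp add: unif_def measure_pmf_of_set divide_right_mono)
qed

lemma dtv_unif_ge_card_zeros:
  assumes "n \<ge> 1" and "S \<subseteq> {1..n}" and zero: "\<And>i. i \<in> S \<Longrightarrow> pmf D i = 0"
  shows "card S / (2 * n) \<le> dtv n D (unif n)"
proof -
  have "(\<Sum>i\<in>S. \<bar>pmf D i - pmf (unif n) i\<bar>) = (\<Sum>i\<in>S. 1 / n)"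
    by (rule sum.cong) (use assms in \<open>auto simp: unif_def pmf_of_set\<close>)
  then have "card S / n = (\<Sum>i\<in>S. \<bar>pmf D i - pmf (unif n) i\<bar>)"
    by simp
  also have "\<dots> \<le> (\<Sum>i\<in>{1..n}. \<bar>pmf D i - pmf (unif n) i\<bar>)"
    by (rule sum_mono2) (use assms(2) in auto)
  finally show ?thesis by (simp add: dtv_def)
qed

lemma ceval_map_collapse_blocks_eq_but_one:
  "\<exists>k0. \<forall>k. k \<noteq> k0 \<longrightarrow> ceval (map_pmf (collapse_block (k * m) m) D) j = ceval D j"
proof (intro exI allI impI)
  fix k assume "k \<noteq> j div m"
  moreover have "j div m = k" if "k * m \<le> j" "j < k * m + m"
    using that by (intro div_nat_eqI) (auto simp: mult.commute)
  ultimately have "j \<le> k * m \<or> k * m + m \<le> j"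
    by linarith
  then show "ceval (map_pmf (collapse_block (k * m) m) D) j = ceval D j"
    by (rule ceval_map_collapse_block)
qed

lemma abs_expectation_collapse_block_unif_le:
  fixes g :: "nat \<Rightarrow> real"
  assumes "n \<ge> 1" and "m \<ge> 1" and "\<And>i. 0 \<le> g i \<and> g i \<le> 1"
  shows "\<bar>measure_pmf.expectation (map_pmf (collapse_block a m) (unif n)) g
            - measure_pmf.expectation (unif n) g\<bar> \<le> (real m - 1) / n"
proof -
  have "measure_pmf.prob (unif n) {a + 1..a + m - 1} \<le> (real m - 1) / n"
    using prob_unif_le_card[OF assms(1), of "{a + 1..a + m - 1}"] assms(2) by (simp add: of_nat_diff)
  then show ?thesis
    using abs_expectation_map_pmf_diff_le[where g = g and f = "collapse_block a m" and M = "unif n"] assms(3)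
    by (simp add: collapse_block_moved)
qed

lemma dtv_collapse_block_unif_ge:
  assumes "n \<ge> 1" and "m \<ge> 1" and "a + m \<le> n"
  shows "(real m - 1) / (2 * n) \<le> dtv n (map_pmf (collapse_block a m) (unif n)) (unif n)"
proof -
  have block: "{a + 1..a + m - 1} \<subseteq> {1..n}"
    using assms(3) by auto
  show ?thesis
    using dtv_unif_ge_card_zeros[OF assms(1) block] assms(2)
    by (simp add: pmf_map_collapse_block_eq_0 of_nat_diff)
qed

lemma unif_tester_queries_ge_blocks:
  fixes n m K q :: nat
  assumes n: "n \<ge> 1" and m: "m \<ge> 1" and blocks: "K * m \<le> n"
    and eps: "eps \<le> (real m - 1) / (2 * n)"
    and tester: "unif_tester n eps q T"
  shows "real K \<le> 6 * real q"
proof -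
  define D where "D k = map_pmf (collapse_block (k * m) m) (unif n)" for k
  define \<rho> where "\<rho> = (real m - 1) / n"
  have distinguished: "1 / 3 \<le> \<bar>accept_prob (D k) T - accept_prob (unif n) T\<bar>" if "k < K" for k
  proof -
    have inside: "k * m + m \<le> n"
      using that blocks by (metis add.commute le_trans mult_Suc mult_le_mono1 Suc_leI)
    then have "eps \<le> dtv n (D k) (unif n)"
      using dtv_collapse_block_unif_ge[OF n m] eps unfolding D_def by (meson order_trans)
    moreover have "distr_on n (D k)"
      unfolding D_def using inside n
      by (intro distr_on_map_collapse_block) (auto simp: distr_on_def set_pmf_unif)
    ultimately have "pmf (run (D k) T) False \<ge> 2 / 3"
      using tester unfolding unif_tester_def by auto
    moreover have "pmf (run (unif n) T) True \<ge> 2 / 3"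
      using tester unfolding unif_tester_def by blast
    ultimately show ?thesis
      using pmf_True_eq_1_minus_False[of "run (D k) T"] by (simp add: accept_prob_def)
  qed
  have "K * \<rho> \<le> 1"
  proof -
    have "real K * (real m - 1) \<le> real K * real m" by (simp add: mult_left_mono)
    also have "\<dots> \<le> n" using blocks by (metis of_nat_le_iff of_nat_mult)
    finally show ?thesis using n by (simp add: \<rho>_def field_simps)
  qed
  have "real K / 3 \<le> (\<Sum>k<K. \<bar>accept_prob (D k) T - accept_prob (unif n) T\<bar>)"
    using sum_mono[of "{..<K}" "\<lambda>_. 1 / 3 :: real"] distinguished by simp
  also have "\<dots> \<le> real q * (1 + K * \<rho>)"
    using ceval_map_collapse_blocks_eq_but_one abs_expectation_collapse_block_unif_le[OF n m] tester m
    by (intro sum_accept_prob_diff_le) (auto simp: D_def \<rho>_def unif_tester_def)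
  also have "\<dots> \<le> real q * 2"
    using \<open>K * \<rho> \<le> 1\<close> by (intro mult_left_mono) auto
  finally show ?thesis by linarith
qed

lemma unif_tester_queries_ge:
  fixes n q :: nat and eps :: real
  assumes eps: "0 < eps" "eps \<le> 1 / 6" and large: "2 \<le> eps * n"
    and tester: "unif_tester n eps q T"
  shows "1 / (36 * eps) \<le> q"
proof -
  define m where "m = nat \<lceil>2 * eps * n\<rceil> + 1"
  define K where "K = n div m"
  have n: "n \<ge> 1" using large by (cases n) auto
  have m_minus_1: "real m - 1 = \<lceil>2 * eps * n\<rceil>"
    using large eps by (simp add: m_def)
  then have m_lower: "2 * eps * n \<le> real m - 1" and m_upper: "real m \<le> 3 * eps * n"
    using large by linarith+
  have m: "1 \<le> m" by (simp add: m_def)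
  have "real K \<le> 6 * real q"
  proof (rule unif_tester_queries_ge_blocks[OF n m _ _ tester])
    show "K * m \<le> n" unfolding K_def by (rule div_times_less_eq_dividend)
    show "eps \<le> (real m - 1) / (2 * n)" using m_lower n by (simp add: field_simps)
  qed
  moreover have "1 / (6 * eps) \<le> real K"
  proof -
    have "n < (K + 1) * m"
      using dividend_less_times_div[of m n] m by (simp add: K_def algebra_simps)
    then have "real n < (real K + 1) * real m"
      by (metis of_nat_1 of_nat_add of_nat_less_iff of_nat_mult)
    also have "\<dots> \<le> (real K + 1) * (3 * eps * n)"
      using m_upper by (intro mult_left_mono) auto
    finally have "real n * 1 < real n * ((real K + 1) * (3 * eps))"
      by (simp add: algebra_simps)
    then have "1 < (real K + 1) * (3 * eps)"
      using n by (subst (asm) mult_less_cancel_left_pos) auto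
    then have "1 / (3 * eps) < real K + 1"
      using eps by (simp add: field_simps)
    moreover have "1 \<le> 1 / (6 * eps)"
      using eps by (simp add: field_simps)
    ultimately show ?thesis by (simp add: field_simps)
  qed
  ultimately have "1 / (6 * eps) \<le> 6 * real q"
    by linarith
  then show ?thesis
    using eps by (simp add: field_simps)
qed

theorem theorem4:
  shows "\<exists>c>0. \<exists>eps0>0. \<forall>eps. 0 < eps \<and> eps \<le> eps0 \<longrightarrow>
           (\<exists>N. \<forall>n\<ge>N. \<forall>q T. unif_tester n eps q T \<longrightarrow> real q \<ge> c / eps)"
proof (rule exI[of _ "1 / 36"], intro conjI exI[of _ "1 / 6"] allI impI)
  fix eps :: real assume "0 < eps \<and> eps \<le> 1 / 6"
  then have eps: "0 < eps" "eps \<le> 1 / 6" by auto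
  show "\<exists>N. \<forall>n\<ge>N. \<forall>q T. unif_tester n eps q T \<longrightarrow> real q \<ge> (1 / 36) / eps"
  proof (intro exI[of _ "nat \<lceil>2 / eps\<rceil>"] allI impI)
    fix n q T assume "nat \<lceil>2 / eps\<rceil> \<le> n" and tester: "unif_tester n eps q T"
    then have "2 / eps \<le> real n" by linarith
    then have "2 \<le> eps * n" using eps by (simp add: field_simps)
    then show "real q \<ge> (1 / 36) / eps"
      using unif_tester_queries_ge[OF eps _ tester] by simp
  qed
qed simp_all

end
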